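(* We have $(\chi^L_k)^\dagger=\chi^L_{-k}$ for $k\in\pm\mathcal K^{(\ell_L)}$ and $(\chi^R_k)^\dagger=\chi^R_{-k}$ for $k\in\pm\mathcal K^{(\ell_R)}$; $\{\chi^L_{k_1},\chi^L_{k_2}\}=\delta_{k_1,-k_2}\mathrm{id}$ for $k_1,k_2\in\pm\mathcal K^{(\ell_L)}$; $\{\chi^R_{k_1},\chi^R_{k_2}\}=\delta_{k_1,-k_2}\mathrm{id}$ for $k_1,k_2\in\pm\mathcal K^{(\ell_R)}$; and $\{\chi^L_k,\chi^R_{k'}\}=0$ for $k\in\pm\mathcal K^{(\ell_L)}$, $k'\in\pm\mathcal K^{(\ell_R)}$. Here $\{A,B\}=AB+BA$.
   Context: Fix integers $a<0<b$, $\ell_L=-a$, $\ell_R=b$; for a positive integer $n$, $\mathcal K^{(n)}=\{\frac12,\dots,n-\frac12\}$, $\pm\mathcal K^{(n)}=\mathcal K^{(n)}\cup(-\mathcal K^{(n)})$. $C=\{a,\dots,b\}$, $C^*=\{a+\frac12,\dots,b-\frac12\}$, $C^*_L=\{a+\frac12,\dots,-\frac12\}$, $C^*_R=\{\frac12,\dots,b-\frac12\}$. $\tilde V$ is the complex inner product space with orthonormal basis $(e_\rho)_{\rho\in\{\pm1\}^C}$, $\dagger$ the adjoint. For $x'\in C^*$, $\varsigma_{x'}(\rho)$ flips the signs of $\rho_x$, $x<x'$; $\psi_{x'}e_\rho=\frac{-\rho_{x'-1/2}+i\rho_{x'+1/2}}{\sqrt2}e_{\varsigma_{x'}(\rho)}$,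 $\psi^*_{x'}e_\rho=\frac{-i\rho_{x'-1/2}+\rho_{x'+1/2}}{\sqrt2}e_{\varsigma_{x'}(\rho)}$. Substrip eigenfunctions: for integers $a'<b'$, $n=b'-a'$, on the lattice strip $\{a',\dots,b'\}\times\mathbb Z\subset\mathbb C$ with nearest-neighbour edges (identified with midpoints), $F$ is s-holomorphic if $F(z_1)+\frac{i|v-p|}{v-p}\overline{F(z_1)}=F(z_2)+\frac{i|v-p|}{v-p}\overline{F(z_2)}$ for edges adjacent to a common vertex $v$ and face $p$, with Riemann boundary values if $F(a'+iy')\in e^{-i\pi/4}\mathbb R$, $F(b'+iy')\in e^{i\pi/4}\mathbb R$. For $k\in\mathcal K^{(n)}$ let $\omega_k\in((k-\frac12)\pi/n,k\pi/n)$ solve $\cos((n+\frac12)\omega)/\cos((n-\frac12)\omega)=3-2\sqrt2$, $\lambda^{(n)}_{\pm k}=(2-\cos\omega_k+\sqrt{(3-\cos\omega_k)(1-\cos\omega_k)})^{\pm1}$; $F_{\pm k}$ is the unique s-holomorphic function with Riemann boundary values, $F_{\pm k}(z+ih)=(\lambda^{(n)}_{\pm k})^hF_{\pm k}(z)$, values in $e^{-i\pi/4}\mathbb R_{>0}$ on edges $a'+iy'$, and unit-norm restriction to the height-0 horizontal edges $\{a'+\frac12,\dots,b'-\frac12\}$, the norm coming from $\langle f,g\rangle=\mathrm{Re}\sum f\bar g$. Known facts: these restrictions $f_{k}$, $k\in\pm\mathcal K^{(n)}$, form an orthonormal basis of $\mathbb C^{\{a'+1/2,\dots,b'-1/2\}}$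 and satisfy $f_{-k}=-i\overline{f_k}$. Let $f^L_k$ ($k\in\pm\mathcal K^{(\ell_L)}$) be these restrictions for $(a',b')=(a,0)$ (functions on $C^*_L$) and $f^R_k$ ($k\in\pm\mathcal K^{(\ell_R)}$) those for $(a',b')=(0,b)$ (functions on $C^*_R$). Modes: $\chi^L_k=\frac{e^{i\pi/4}}{2}\sum_{x'\in C^*_L}(i f^L_k(x')\psi_{x'}-i\overline{f^L_k(x')}\psi^*_{x'})$ and $\chi^R_k=\frac{e^{i\pi/4}}{2}\sum_{x'\in C^*_R}(i f^R_k(x')\psi_{x'}-i\overline{f^R_k(x')}\psi^*_{x'})$. *)

theory Defs
  imports "HOL-Analysis.Analysis"
begin

text \<open>Strip {a'..b'} x Z inside the complex plane. Edges are identified with their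
midpoints, vertices are lattice points, faces are identified with their centres.\<close>

definition strip_edges :: "int \<Rightarrow> int \<Rightarrow> complex set" where
  "strip_edges a' b' =
     {Complex (of_int x + 1/2) (of_int y) | x y. a' \<le> x \<and> x < b'} \<union>
     {Complex (of_int x) (of_int y + 1/2) | x y. a' \<le> x \<and> x \<le> b'}"

definition strip_vertices :: "int \<Rightarrow> int \<Rightarrow> complex set" where
  "strip_vertices a' b' = {Complex (of_int x) (of_int y) | x y. a' \<le> x \<and> x \<le> b'}"

definition strip_faces :: "int \<Rightarrow> int \<Rightarrow> complex set" where
  "strip_faces a' b' = {Complex (of_int x + 1/2) (of_int y + 1/2) | x y. a' \<le> x \<and> x < b'}"

text \<open>An edge (midpoint z) is adjacent to a vertex v resp. a face p iff |z - v| = 1/2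
resp. |z - p| = 1/2.\<close>

definition s_holomorphic :: "int \<Rightarrow> int \<Rightarrow> (complex \<Rightarrow> complex) \<Rightarrow> bool" where
  "s_holomorphic a' b' F \<longleftrightarrow>
     (\<forall>z1\<in>strip_edges a' b'. \<forall>z2\<in>strip_edges a' b'.
      \<forall>v\<in>strip_vertices a' b'. \<forall>p\<in>strip_faces a' b'.
        cmod (z1 - v) = 1/2 \<and> cmod (z1 - p) = 1/2 \<and>
        cmod (z2 - v) = 1/2 \<and> cmod (z2 - p) = 1/2 \<longrightarrow>
        F z1 + \<i> * (of_real (cmod (v - p)) / (v - p)) * cnj (F z1)
          = F z2 + \<i> * (of_real (cmod (v - p)) / (v - p)) * cnj (F z2))"

definition riemann_bv :: "int \<Rightarrow> int \<Rightarrow> (complex \<Rightarrow> complex) \<Rightarrow> bool" where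
  "riemann_bv a' b' F \<longleftrightarrow>
     (\<forall>y::int. \<exists>r::real. F (Complex (of_int a') (of_int y + 1/2)) = cis (- pi/4) * of_real r) \<and>
     (\<forall>y::int. \<exists>r::real. F (Complex (of_int b') (of_int y + 1/2)) = cis (pi/4) * of_real r)"

definition Kset :: "nat \<Rightarrow> real set" where
  "Kset n = {k. \<exists>m::nat. m < n \<and> k = real m + 1/2}"

definition pmK :: "nat \<Rightarrow> real set" where
  "pmK n = Kset n \<union> uminus ` Kset n"

definition omega :: "nat \<Rightarrow> real \<Rightarrow> real" where
  "omega n k = (SOME w. (k - 1/2) * pi / real n < w \<and> w < k * pi / real n \<and>
       cos ((real n + 1/2) * w) / cos ((real n - 1/2) * w) = 3 - 2 * sqrt 2)"

definition lam :: "nat \<Rightarrow> real \<Rightarrow> real" where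
  "lam n k = (let w = omega n \<bar>k\<bar>;
                  base = 2 - cos w + sqrt ((3 - cos w) * (1 - cos w))
              in if k > 0 then base else inverse base)"

text \<open>The restriction f_k of F_k to the height-0 horizontal edges; the value at the
edge with midpoint j + 1/2 (a' \<le> j < b') is stored at index j (zero elsewhere).\<close>

definition eigf :: "int \<Rightarrow> int \<Rightarrow> real \<Rightarrow> int \<Rightarrow> complex" where
  "eigf a' b' k = (THE f. (\<forall>j. \<not> (a' \<le> j \<and> j < b') \<longrightarrow> f j = 0) \<and>
     (\<exists>F. s_holomorphic a' b' F \<and> riemann_bv a' b' F \<and>
        (\<forall>z\<in>strip_edges a' b'. \<forall>h::int.
            F (z + \<i> * of_int h) = of_real (lam (nat (b' - a')) k powi h) * F z) \<and>
        (\<forall>y::int. \<exists>r::real. r > 0 \<and>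
            F (Complex (of_int a') (of_int y + 1/2)) = cis (- pi/4) * of_real r) \<and>
        (\<Sum>j\<in>{a'..<b'}. (cmod (F (Complex (of_int j + 1/2) 0)))\<^sup>2) = 1 \<and>
        (\<forall>j. a' \<le> j \<and> j < b' \<longrightarrow> f j = F (Complex (of_int j + 1/2) 0))))"

definition Conf :: "int \<Rightarrow> int \<Rightarrow> (int \<Rightarrow> int) set" where
  "Conf a b = {\<rho>. (\<forall>x. a \<le> x \<and> x \<le> b \<longrightarrow> \<rho> x = 1 \<or> \<rho> x = -1) \<and>
                   (\<forall>x. \<not> (a \<le> x \<and> x \<le> b) \<longrightarrow> \<rho> x = 1)}"

text \<open>Vectors of V~: coefficient functions w.r.t. the orthonormal basis e_rho.\<close>

definition Vt :: "int \<Rightarrow> int \<Rightarrow> ((int \<Rightarrow> int) \<Rightarrow> complex) set" where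
  "Vt a b = {v. \<forall>\<rho>. \<rho> \<notin> Conf a b \<longrightarrow> v \<rho> = 0}"

definition inner_V :: "int \<Rightarrow> int \<Rightarrow> ((int \<Rightarrow> int) \<Rightarrow> complex) \<Rightarrow> ((int \<Rightarrow> int) \<Rightarrow> complex) \<Rightarrow> complex" where
  "inner_V a b v w = (\<Sum>\<rho>\<in>Conf a b. v \<rho> * cnj (w \<rho>))"

definition basis_e :: "(int \<Rightarrow> int) \<Rightarrow> (int \<Rightarrow> int) \<Rightarrow> complex" where
  "basis_e \<rho> = (\<lambda>\<sigma>. if \<sigma> = \<rho> then 1 else 0)"

text \<open>The half-integer x' = j + 1/2 is represented by the integer j.
varsigma_{x'} flips rho_x for x < x', i.e. x \<le> j, x in C.\<close>

definition flip :: "int \<Rightarrow> int \<Rightarrow> int \<Rightarrow> (int \<Rightarrow> int) \<Rightarrow> (int \<Rightarrow> int)" where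
  "flip a b j \<rho> = (\<lambda>x. if a \<le> x \<and> x \<le> b \<and> x \<le> j then - \<rho> x else \<rho> x)"

definition psi :: "int \<Rightarrow> int \<Rightarrow> int \<Rightarrow> ((int \<Rightarrow> int) \<Rightarrow> complex) \<Rightarrow> ((int \<Rightarrow> int) \<Rightarrow> complex)" where
  "psi a b j v = (\<lambda>\<sigma>. \<Sum>\<rho>\<in>Conf a b. v \<rho> *
      ((- of_int (\<rho> j) + \<i> * of_int (\<rho> (j+1))) / of_real (sqrt 2)) * basis_e (flip a b j \<rho>) \<sigma>)"

definition psi_star :: "int \<Rightarrow> int \<Rightarrow> int \<Rightarrow> ((int \<Rightarrow> int) \<Rightarrow> complex) \<Rightarrow> ((int \<Rightarrow> int) \<Rightarrow> complex)" where
  "psi_star a b j v = (\<lambda>\<sigma>. \<Sum>\<rho>\<in>Conf a b. v \<rho> *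
      ((- \<i> * of_int (\<rho> j) + of_int (\<rho> (j+1))) / of_real (sqrt 2)) * basis_e (flip a b j \<rho>) \<sigma>)"

definition fL :: "int \<Rightarrow> real \<Rightarrow> int \<Rightarrow> complex" where
  "fL a k = eigf a 0 k"

definition fR :: "int \<Rightarrow> real \<Rightarrow> int \<Rightarrow> complex" where
  "fR b k = eigf 0 b k"

definition chiL :: "int \<Rightarrow> int \<Rightarrow> real \<Rightarrow> ((int \<Rightarrow> int) \<Rightarrow> complex) \<Rightarrow> ((int \<Rightarrow> int) \<Rightarrow> complex)" where
  "chiL a b k v = (\<lambda>\<sigma>. cis (pi/4) / 2 * (\<Sum>j\<in>{a..<0}.
      \<i> * fL a k j * psi a b j v \<sigma> - \<i> * cnj (fL a k j) * psi_star a b j v \<sigma>))"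

definition chiR :: "int \<Rightarrow> int \<Rightarrow> real \<Rightarrow> ((int \<Rightarrow> int) \<Rightarrow> complex) \<Rightarrow> ((int \<Rightarrow> int) \<Rightarrow> complex)" where
  "chiR a b k v = (\<lambda>\<sigma>. cis (pi/4) / 2 * (\<Sum>j\<in>{0..<b}.
      \<i> * fR b k j * psi a b j v \<sigma> - \<i> * cnj (fR b k j) * psi_star a b j v \<sigma>))"

end

theory Submission
  imports Defs
begin

text \<open>
  On each configuration, psi_j and psi*_j act as the spin flip at j times an amplitude
  depending only on the spins at j and j + 1. Hence psi_j squares to -1, psi*_j to 1, and the
  two anticommute; at different sites j < j' the flips commute, while the flip at j' negates
  both spins read by the amplitude at j, so the operators anticommute. Likewise psi_j is
  anti-self-adjoint and psi*_j self-adjoint. A mode with coefficients f is a linear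
  combination of these generators, so its anticommutator with the mode of g is
  Re (\<Sum>j. \<i> f_j g_j) times the identity, and its adjoint is the mode of -\<i> conj f.
  With f_{-k} = -\<i> conj f_k the anticommutator becomes the real inner product of f_{k1} and
  f_{-k2}; the left and right modes use disjoint sites and therefore anticommute.
\<close>

lemma flip_flip [simp]: "flip a b j (flip a b j \<rho>) = \<rho>"
  by (rule ext) (simp add: flip_def)

lemma flip_commute: "flip a b j (flip a b j' \<rho>) = flip a b j' (flip a b j \<rho>)"
  by (rule ext) (simp add: flip_def)

lemma flip_in_Conf_iff [simp]: "flip a b j \<rho> \<in> Conf a b \<longleftrightarrow> \<rho> \<in> Conf a b"
  unfolding Conf_def flip_def by (auto split: if_splits)

lemma finite_Conf: "finite (Conf a b)"
proof -
  let ?extend = "\<lambda>g x. if x \<in> {a..b} then g x else (1::int)"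
  have "Conf a b \<subseteq> ?extend ` ({a..b} \<rightarrow>\<^sub>E {1, -1})"
  proof
    fix \<rho> assume "\<rho> \<in> Conf a b"
    then have "\<rho> = ?extend (restrict \<rho> {a..b})" and "restrict \<rho> {a..b} \<in> {a..b} \<rightarrow>\<^sub>E {1, -1}"
      unfolding Conf_def by (auto simp: fun_eq_iff)
    then show "\<rho> \<in> ?extend ` ({a..b} \<rightarrow>\<^sub>E {1, -1})" by blast
  qed
  then show ?thesis by (rule finite_subset) (intro finite_imageI finite_PiE; simp)
qed

lemma sum_Conf_flip: "(\<Sum>\<sigma>\<in>Conf a b. g (flip a b j \<sigma>)) = (\<Sum>\<sigma>\<in>Conf a b. g \<sigma>)"
  by (rule sum.reindex_bij_witness[of _ "flip a b j" "flip a b j"]) auto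

lemma sum_Conf_basis_flip:
  "(\<Sum>\<rho>\<in>Conf a b. g \<rho> * basis_e (flip a b j \<rho>) \<sigma>) = (if \<sigma> \<in> Conf a b then g (flip a b j \<sigma>) else 0)"
proof -
  have "(\<Sum>\<rho>\<in>Conf a b. g \<rho> * basis_e (flip a b j \<rho>) \<sigma>) = (\<Sum>\<rho>\<in>Conf a b. g (flip a b j \<rho>) * basis_e \<rho> \<sigma>)"
    using sum_Conf_flip[where g = "\<lambda>\<rho>. g (flip a b j \<rho>) * basis_e \<rho> \<sigma>" and a = a and b = b and j = j]
    by simp
  also have "\<dots> = (\<Sum>\<rho>\<in>Conf a b. if \<sigma> = \<rho> then g (flip a b j \<rho>) else 0)"
    by (intro sum.cong) (auto simp: basis_e_def)
  finally show ?thesis by (simp add: finite_Conf)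
qed

definition psi_amp :: "bool \<Rightarrow> int \<Rightarrow> (int \<Rightarrow> int) \<Rightarrow> complex" where
  "psi_amp s j \<rho> = (if s then - \<i> * of_int (\<rho> j) + of_int (\<rho> (j+1))
                    else - of_int (\<rho> j) + \<i> * of_int (\<rho> (j+1))) / of_real (sqrt 2)"

definition psi_gen :: "int \<Rightarrow> int \<Rightarrow> int \<times> bool \<Rightarrow> ((int \<Rightarrow> int) \<Rightarrow> complex) \<Rightarrow> ((int \<Rightarrow> int) \<Rightarrow> complex)" where
  "psi_gen a b p = (if snd p then psi_star a b (fst p) else psi a b (fst p))"

definition psi_sign :: "bool \<Rightarrow> complex" where
  "psi_sign s = (if s then 1 else -1)"

lemma psi_gen_apply:
  "psi_gen a b p v \<sigma> =
     (if \<sigma> \<in> Conf a b then v (flip a b (fst p) \<sigma>) * psi_amp (snd p) (fst p) (flip a b (fst p) \<sigma>) else 0)"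
  by (cases "snd p"; simp only: psi_gen_def psi_def psi_star_def sum_Conf_basis_flip if_True if_False)
     (simp_all add: psi_amp_def)

lemma psi_amp_flip_same:
  assumes "\<rho> \<in> Conf a b" "a \<le> j" "j < b"
  shows "psi_amp s j \<rho> * psi_amp s' j (flip a b j \<rho>) + psi_amp s' j \<rho> * psi_amp s j (flip a b j \<rho>)
           = (if s = s' then 2 * psi_sign s else 0)"
proof -
  have "\<rho> j = 1 \<or> \<rho> j = -1" "\<rho> (j+1) = 1 \<or> \<rho> (j+1) = -1"
    using assms unfolding Conf_def by auto
  moreover have "flip a b j \<rho> j = - \<rho> j" "flip a b j \<rho> (j+1) = \<rho> (j+1)"
    using assms by (auto simp: flip_def)
  moreover have "complex_of_real (sqrt 2) * complex_of_real (sqrt 2) = 2"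
    by (simp flip: of_real_mult)
  ultimately show ?thesis
    unfolding psi_amp_def psi_sign_def
    by (cases s; cases s'; elim disjE; simp add: field_simps)
qed

lemma psi_amp_flip_above:
  assumes "a \<le> j" "j < j'" "j' \<le> b"
  shows "psi_amp s j (flip a b j' \<rho>) = - psi_amp s j \<rho>"
  using assms by (cases s) (auto simp: psi_amp_def flip_def field_simps)

lemma psi_amp_flip_below:
  assumes "j < j'"
  shows "psi_amp s j' (flip a b j \<rho>) = psi_amp s j' \<rho>"
  using assms by (cases s) (auto simp: psi_amp_def flip_def)

lemma psi_amp_cnj:
  assumes "a \<le> j" "j \<le> b"
  shows "psi_amp s j \<rho> = psi_sign s * cnj (psi_amp s j (flip a b j \<rho>))"
  using assms by (cases s) (auto simp: psi_amp_def psi_sign_def flip_def field_simps)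

lemma psi_gen_anticomm_distinct_sites:
  assumes "\<sigma> \<in> Conf a b" "a \<le> fst p" "fst p < fst q" "fst q < b"
  shows "psi_gen a b p (psi_gen a b q v) \<sigma> + psi_gen a b q (psi_gen a b p v) \<sigma> = 0"
proof -
  obtain j s j' s' where pq: "p = (j, s)" "q = (j', s')" by (cases p, cases q)
  have "psi_amp s' j' (flip a b j (flip a b j' \<sigma>)) = psi_amp s' j' (flip a b j' \<sigma>)"
    using assms pq by (intro psi_amp_flip_below) simp
  moreover have "psi_amp s j (flip a b j (flip a b j' \<sigma>)) = - psi_amp s j (flip a b j \<sigma>)"
    using assms pq by (simp add: flip_commute psi_amp_flip_above)
  ultimately show ?thesis
    using assms by (simp add: psi_gen_apply pq flip_commute[of a b j' j])
qed

lemma psi_gen_anticomm: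
  assumes "v \<in> Vt a b" "fst p \<in> {a..<b}" "fst q \<in> {a..<b}"
  shows "psi_gen a b p (psi_gen a b q v) \<sigma> + psi_gen a b q (psi_gen a b p v) \<sigma>
           = (if p = q then 2 * psi_sign (snd p) * v \<sigma> else 0)"
proof (cases "\<sigma> \<in> Conf a b")
  case False
  then show ?thesis using assms(1) by (simp add: psi_gen_apply Vt_def)
next
  case \<sigma>: True
  obtain j s j' s' where pq: "p = (j, s)" "q = (j', s')" by (cases p, cases q)
  consider "j = j'" | "j < j'" | "j' < j" by linarith
  then show ?thesis
  proof cases
    case 1
    have "psi_gen a b p (psi_gen a b q v) \<sigma> + psi_gen a b q (psi_gen a b p v) \<sigma>
        = v \<sigma> * (psi_amp s j \<sigma> * psi_amp s' j (flip a b j \<sigma>) + psi_amp s' j \<sigma> * psi_amp s j (flip a b j \<sigma>))"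
      using \<sigma> by (simp add: psi_gen_apply pq 1 algebra_simps)
    then show ?thesis
      using psi_amp_flip_same[OF \<sigma>, of j s s'] assms pq 1 by auto
  next
    case 2
    then show ?thesis using psi_gen_anticomm_distinct_sites[OF \<sigma>, of p q v] assms pq by auto
  next
    case 3
    then show ?thesis using psi_gen_anticomm_distinct_sites[OF \<sigma>, of q p v] assms pq by (auto simp: add.commute)
  qed
qed

lemma inner_psi_gen:
  assumes "fst p \<in> {a..<b}"
  shows "inner_V a b (psi_gen a b p v) w = psi_sign (snd p) * inner_V a b v (psi_gen a b p w)"
proof -
  obtain j s where p: "p = (j, s)" by (cases p)
  have "inner_V a b (psi_gen a b p v) w
      = (\<Sum>\<sigma>\<in>Conf a b. v (flip a b j \<sigma>) * psi_amp s j (flip a b j \<sigma>) * cnj (w \<sigma>))"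
    unfolding inner_V_def by (rule sum.cong) (auto simp: psi_gen_apply p)
  also have "\<dots> = (\<Sum>\<sigma>\<in>Conf a b. v \<sigma> * psi_amp s j \<sigma> * cnj (w (flip a b j \<sigma>)))"
    using sum_Conf_flip[where g = "\<lambda>\<sigma>. v \<sigma> * psi_amp s j \<sigma> * cnj (w (flip a b j \<sigma>))" and a = a and b = b and j = j]
    by simp
  also have "\<dots> = psi_sign s * (\<Sum>\<sigma>\<in>Conf a b. v \<sigma> * cnj (w (flip a b j \<sigma>) * psi_amp s j (flip a b j \<sigma>)))"
    unfolding sum_distrib_left using assms p
    by (intro sum.cong refl) (subst psi_amp_cnj[of a j b], auto)
  also have "\<dots> = psi_sign (snd p) * inner_V a b v (psi_gen a b p w)"
    unfolding inner_V_def by (auto simp: psi_gen_apply p intro!: sum.cong)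
  finally show ?thesis .
qed

definition psi_comb :: "int \<Rightarrow> int \<Rightarrow> (int \<times> bool \<Rightarrow> complex) \<Rightarrow> (int \<times> bool) set \<Rightarrow>
    ((int \<Rightarrow> int) \<Rightarrow> complex) \<Rightarrow> ((int \<Rightarrow> int) \<Rightarrow> complex)" where
  "psi_comb a b A I v = (\<lambda>\<sigma>. \<Sum>p\<in>I. A p * psi_gen a b p v \<sigma>)"

lemma psi_gen_sum:
  "psi_gen a b p (\<lambda>\<sigma>. \<Sum>q\<in>J. B q * w q \<sigma>) \<sigma> = (\<Sum>q\<in>J. B q * psi_gen a b p (w q) \<sigma>)"
  by (simp add: psi_gen_apply sum_distrib_right mult.assoc)

lemma psi_comb_comp:
  "psi_comb a b A I (psi_comb a b B J v) \<sigma> = (\<Sum>p\<in>I. \<Sum>q\<in>J. A p * B q * psi_gen a b p (psi_gen a b q v) \<sigma>)"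
  unfolding psi_comb_def psi_gen_sum by (simp add: sum_distrib_left mult.assoc)

lemma psi_comb_anticomm:
  assumes "finite I" "finite J" "fst ` I \<subseteq> {a..<b}" "fst ` J \<subseteq> {a..<b}" "v \<in> Vt a b"
  shows "psi_comb a b A I (psi_comb a b B J v) \<sigma> + psi_comb a b B J (psi_comb a b A I v) \<sigma>
           = (\<Sum>p\<in>I \<inter> J. 2 * psi_sign (snd p) * A p * B p) * v \<sigma>"
proof -
  have "psi_comb a b A I (psi_comb a b B J v) \<sigma> + psi_comb a b B J (psi_comb a b A I v) \<sigma>
      = (\<Sum>p\<in>I. \<Sum>q\<in>J. A p * B q * (psi_gen a b p (psi_gen a b q v) \<sigma> + psi_gen a b q (psi_gen a b p v) \<sigma>))"
    unfolding psi_comb_comp sum.swap[of _ J] by (simp add: sum.distrib[symmetric] algebra_simps)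
  also have "\<dots> = (\<Sum>p\<in>I. \<Sum>q\<in>J. if p = q then 2 * psi_sign (snd p) * A p * B p * v \<sigma> else 0)"
    using assms(3-5) by (intro sum.cong refl) (auto simp: psi_gen_anticomm image_subset_iff)
  also have "\<dots> = (\<Sum>p\<in>I \<inter> J. 2 * psi_sign (snd p) * A p * B p * v \<sigma>)"
    using assms(1,2) by (simp add: sum.delta sum.inter_restrict)
  finally show ?thesis
    by (simp add: sum_distrib_right)
qed

lemma inner_psi_comb:
  assumes "finite I" "fst ` I \<subseteq> {a..<b}" "\<And>p. p \<in> I \<Longrightarrow> B p = psi_sign (snd p) * cnj (A p)"
  shows "inner_V a b (psi_comb a b A I v) w = inner_V a b v (psi_comb a b B I w)"
proof -
  have "inner_V a b (psi_comb a b A I v) w = (\<Sum>p\<in>I. A p * inner_V a b (psi_gen a b p v) w)"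
    unfolding inner_V_def psi_comb_def
    by (simp add: sum_distrib_right sum_distrib_left mult.assoc sum.swap[of _ "Conf a b"])
  also have "\<dots> = (\<Sum>p\<in>I. cnj (B p) * inner_V a b v (psi_gen a b p w))"
    using assms(2,3) by (intro sum.cong refl) (auto simp: inner_psi_gen psi_sign_def)
  also have "\<dots> = inner_V a b v (psi_comb a b B I w)"
    unfolding inner_V_def psi_comb_def
    by (simp add: sum_distrib_right sum_distrib_left mult.assoc mult.left_commute sum.swap[of _ "Conf a b"])
  finally show ?thesis .
qed

definition mode :: "int \<Rightarrow> int \<Rightarrow> int set \<Rightarrow> (int \<Rightarrow> complex) \<Rightarrow>
    ((int \<Rightarrow> int) \<Rightarrow> complex) \<Rightarrow> ((int \<Rightarrow> int) \<Rightarrow> complex)" where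
  "mode a b J f v = (\<lambda>\<sigma>. cis (pi/4) / 2 * (\<Sum>j\<in>J.
      \<i> * f j * psi a b j v \<sigma> - \<i> * cnj (f j) * psi_star a b j v \<sigma>))"

lemma chiL_eq_mode: "chiL a b k = mode a b {a..<0} (fL a k)"
  by (simp add: fun_eq_iff chiL_def mode_def)

lemma chiR_eq_mode: "chiR a b k = mode a b {0..<b} (fR b k)"
  by (simp add: fun_eq_iff chiR_def mode_def)

definition mode_coeff :: "(int \<Rightarrow> complex) \<Rightarrow> int \<times> bool \<Rightarrow> complex" where
  "mode_coeff f p = cis (pi/4) / 2 * (if snd p then - \<i> * cnj (f (fst p)) else \<i> * f (fst p))"

lemma mode_eq_psi_comb: "mode a b J f = psi_comb a b (mode_coeff f) (J \<times> UNIV)"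
  unfolding mode_def psi_comb_def fun_eq_iff sum.cartesian_product' UNIV_bool
  by (simp add: sum_distrib_left mode_coeff_def psi_gen_def algebra_simps)

lemma cis_pi4: "cis (pi/4) = Complex (sqrt 2 / 2) (sqrt 2 / 2)"
  by (simp add: cis.ctr cos_45 sin_45)

lemma mode_coeff_adjoint:
  assumes "g j = - \<i> * cnj (f j)"
  shows "mode_coeff g (j, s) = psi_sign s * cnj (mode_coeff f (j, s))"
  using assms unfolding mode_coeff_def psi_sign_def cis_pi4
  by (simp add: complex_eq_iff algebra_simps; simp add: field_simps)

lemma mode_coeff_pairing:
  "(\<Sum>s\<in>UNIV. 2 * psi_sign s * mode_coeff f (j, s) * mode_coeff g (j, s)) = of_real (Re (\<i> * f j * g j))"
proof -
  have "sqrt 2 * sqrt 2 = (2::real)" by simp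
  then show ?thesis
    unfolding UNIV_bool mode_coeff_def psi_sign_def cis_pi4
    by (simp add: complex_eq_iff algebra_simps; simp add: field_simps)
qed

lemma mode_adjoint:
  assumes "finite J" "J \<subseteq> {a..<b}" "\<forall>j\<in>J. g j = - \<i> * cnj (f j)"
  shows "inner_V a b (mode a b J f v) w = inner_V a b v (mode a b J g w)"
  unfolding mode_eq_psi_comb using assms
  by (intro inner_psi_comb) (auto simp: mode_coeff_adjoint)

lemma mode_anticomm:
  assumes "finite J" "finite J'" "J \<subseteq> {a..<b}" "J' \<subseteq> {a..<b}" "v \<in> Vt a b"
  shows "mode a b J f (mode a b J' g v) \<sigma> + mode a b J' g (mode a b J f v) \<sigma>
           = of_real (Re (\<Sum>j\<in>J \<inter> J'. \<i> * f j * g j)) * v \<sigma>"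
proof -
  have "(J \<times> UNIV) \<inter> (J' \<times> UNIV) = (J \<inter> J') \<times> (UNIV :: bool set)" by auto
  then have "mode a b J f (mode a b J' g v) \<sigma> + mode a b J' g (mode a b J f v) \<sigma>
      = (\<Sum>j\<in>J \<inter> J'. \<Sum>s\<in>UNIV. 2 * psi_sign s * mode_coeff f (j, s) * mode_coeff g (j, s)) * v \<sigma>"
    unfolding mode_eq_psi_comb using assms
    by (simp add: psi_comb_anticomm sum.cartesian_product' del: UNIV_bool)
  then show ?thesis
    by (simp add: mode_coeff_pairing Re_sum del: UNIV_bool)
qed

lemma orthonormal_modes_CAR:
  fixes f :: "'k::uminus \<Rightarrow> int \<Rightarrow> complex"
  assumes "finite J" "J \<subseteq> {a..<b}"
    and orth: "\<forall>k1\<in>K. \<forall>k2\<in>K. Re (\<Sum>j\<in>J. f k1 j * cnj (f k2 j)) = (if k1 = k2 then 1 else 0)"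
    and conj: "\<forall>k\<in>K. \<forall>j\<in>J. f (-k) j = - \<i> * cnj (f k j)"
    and neg: "\<forall>k\<in>K. - k \<in> K"
  shows "(\<forall>k\<in>K. \<forall>v\<in>Vt a b. \<forall>w\<in>Vt a b.
            inner_V a b (mode a b J (f k) v) w = inner_V a b v (mode a b J (f (-k)) w)) \<and>
         (\<forall>k1\<in>K. \<forall>k2\<in>K. \<forall>v\<in>Vt a b.
            (\<lambda>\<sigma>. mode a b J (f k1) (mode a b J (f k2) v) \<sigma> + mode a b J (f k2) (mode a b J (f k1) v) \<sigma>)
              = (if k1 = - k2 then v else (\<lambda>_. 0)))"
proof (intro conjI ballI)
  fix k v w assume "k \<in> K"
  then show "inner_V a b (mode a b J (f k) v) w = inner_V a b v (mode a b J (f (-k)) w)"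
    using assms(1,2) conj by (intro mode_adjoint) auto
next
  fix k1 k2 v assume k: "k1 \<in> K" "k2 \<in> K" and v: "v \<in> Vt a b"
  have "(\<Sum>j\<in>J. \<i> * f k1 j * f k2 j) = (\<Sum>j\<in>J. f k1 j * cnj (f (-k2) j))"
    using conj k by (intro sum.cong refl) simp
  then have re: "Re (\<Sum>j\<in>J \<inter> J. \<i> * f k1 j * f k2 j) = (if k1 = - k2 then 1 else 0)"
    using orth k neg by simp
  show "(\<lambda>\<sigma>. mode a b J (f k1) (mode a b J (f k2) v) \<sigma> + mode a b J (f k2) (mode a b J (f k1) v) \<sigma>)
          = (if k1 = - k2 then v else (\<lambda>_. 0))"
    unfolding mode_anticomm[OF assms(1,1,2,2) v] re by auto
qed

theorem proposition5p13:
  fixes a b :: int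
  assumes "a < 0" and "0 < b"
    and fL_orth: "\<forall>k1\<in>pmK (nat (-a)). \<forall>k2\<in>pmK (nat (-a)).
        Re (\<Sum>j\<in>{a..<0}. fL a k1 j * cnj (fL a k2 j)) = (if k1 = k2 then 1 else 0)"
    and fL_span: "\<forall>g::int \<Rightarrow> complex. \<exists>c::real \<Rightarrow> real.
        \<forall>j\<in>{a..<0}. g j = (\<Sum>k\<in>pmK (nat (-a)). of_real (c k) * fL a k j)"
    and fL_conj: "\<forall>k\<in>pmK (nat (-a)). \<forall>j\<in>{a..<0}. fL a (-k) j = - \<i> * cnj (fL a k j)"
    and fR_orth: "\<forall>k1\<in>pmK (nat b). \<forall>k2\<in>pmK (nat b).
        Re (\<Sum>j\<in>{0..<b}. fR b k1 j * cnj (fR b k2 j)) = (if k1 = k2 then 1 else 0)"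
    and fR_span: "\<forall>g::int \<Rightarrow> complex. \<exists>c::real \<Rightarrow> real.
        \<forall>j\<in>{0..<b}. g j = (\<Sum>k\<in>pmK (nat b). of_real (c k) * fR b k j)"
    and fR_conj: "\<forall>k\<in>pmK (nat b). \<forall>j\<in>{0..<b}. fR b (-k) j = - \<i> * cnj (fR b k j)"
  shows
    "(\<forall>k\<in>pmK (nat (-a)). \<forall>v\<in>Vt a b. \<forall>w\<in>Vt a b.
        inner_V a b (chiL a b k v) w = inner_V a b v (chiL a b (-k) w)) \<and>
     (\<forall>k\<in>pmK (nat b). \<forall>v\<in>Vt a b. \<forall>w\<in>Vt a b.
        inner_V a b (chiR a b k v) w = inner_V a b v (chiR a b (-k) w)) \<and>
     (\<forall>k1\<in>pmK (nat (-a)). \<forall>k2\<in>pmK (nat (-a)). \<forall>v\<in>Vt a b.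
        (\<lambda>\<sigma>. chiL a b k1 (chiL a b k2 v) \<sigma> + chiL a b k2 (chiL a b k1 v) \<sigma>)
          = (if k1 = - k2 then v else (\<lambda>_. 0))) \<and>
     (\<forall>k1\<in>pmK (nat b). \<forall>k2\<in>pmK (nat b). \<forall>v\<in>Vt a b.
        (\<lambda>\<sigma>. chiR a b k1 (chiR a b k2 v) \<sigma> + chiR a b k2 (chiR a b k1 v) \<sigma>)
          = (if k1 = - k2 then v else (\<lambda>_. 0))) \<and>
     (\<forall>k\<in>pmK (nat (-a)). \<forall>k'\<in>pmK (nat b). \<forall>v\<in>Vt a b.
        (\<lambda>\<sigma>. chiL a b k (chiR a b k' v) \<sigma> + chiR a b k' (chiL a b k v) \<sigma>) = (\<lambda>_. 0))"
proof -
  have blocks: "{a..<0} \<subseteq> {a..<b}" "{0..<b} \<subseteq> {a..<b}" "{a..<0} \<inter> {0..<b} = {}"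
    using assms(1,2) by auto
  have neg: "\<forall>k\<in>pmK n. - k \<in> pmK n" for n
    unfolding pmK_def by auto
  note left = orthonormal_modes_CAR[OF _ blocks(1) fL_orth fL_conj neg]
  note right = orthonormal_modes_CAR[OF _ blocks(2) fR_orth fR_conj neg]
  have "mode a b {a..<0} f (mode a b {0..<b} g v) \<sigma> + mode a b {0..<b} g (mode a b {a..<0} f v) \<sigma> = 0"
    if "v \<in> Vt a b" for f g v \<sigma>
    using mode_anticomm[OF _ _ blocks(1,2) that] blocks(3) by simp
  then show ?thesis
    unfolding chiL_eq_mode chiR_eq_mode using left right by auto
qed

end
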